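(* Let $\mathcal{Y}$ be a linear subspace of $\mathbb{R}^n$ and let $\mathbf{L}\in\widehat{\mathcal{Y}}$ satisfy $\mathbf{L}(x)\preceq\mathbf{C}\odot\|x\|$ for all $x\in\mathcal{Y}$, where $\mathbf{C}$ is a closed bounded interval. Then $\|\mathbf{L}(x)\|_{I(\mathbb{R})}\le\|\mathbf{C}\|_{I(\mathbb{R})}\|x\|$ for all $x\in\mathcal{Y}$.
   Context: $I(\mathbb{R})$: nonempty compact intervals $\mathbf{A}=[\underline{a},\overline{a}]$; $\mathbf{A}\oplus\mathbf{B}=[\underline{a}+\underline{b},\overline{a}+\overline{b}]$; $\lambda\odot\mathbf{A}=[\min\{\lambda\underline{a},\lambda\overline{a}\},\max\{\lambda\underline{a},\lambda\overline{a}\}]$; $\mathbf{A}\ominus_{gH}\mathbf{B}=[\min\{\underline{a}-\underline{b},\overline{a}-\overline{b}\},\max\{\underline{a}-\underline{b},\overline{a}-\overline{b}\}]$; $\mathbf{A}\preceq\mathbf{B}$ iff $\underline{a}\le\underline{b}$ and $\overline{a}\le\overline{b}$; $\|\mathbf{A}\|_{I(\mathbb{R})}=\max\{|\underline{a}|,|\overline{a}|\}$; $\|\cdot\|$ is the Euclidean norm. An IVF $\mathbf{L}:\mathcal{Y}\to I(\mathbb{R})$ on a linear subspace is linear if (i) $\mathbf{L}(\lambda x)=\lambda\odot\mathbf{L}(x)$ for all $x\in\mathcal{Y}$, $\lambda\in\mathbb{R}$, and (ii) for all $x,y\in\mathcal{Y}$, either $\mathbf{L}(x)\oplus\mathbf{L}(y)=\mathbf{L}(x+y)$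 or neither of $\mathbf{L}(x)\oplus\mathbf{L}(y)$ and $\mathbf{L}(x+y)$ dominates the other w.r.t. $\preceq$. It is $gH$-continuous if $\lim_{\|d\|\to0}(\mathbf{L}(x+d)\ominus_{gH}\mathbf{L}(x))=\mathbf{0}$ at every $x$. $\widehat{\mathcal{Y}}$ denotes the set of all $gH$-continuous linear IVFs on $\mathcal{Y}$. *)

theory Defs
  imports "HOL-Analysis.Analysis" "HOL-Library.Interval"
begin

text \<open>I(R): nonempty compact real intervals, the library type real interval
  (pairs (a,b) with a \<le> b, accessed via lower / upper).\<close>

definition iadd :: "real interval \<Rightarrow> real interval \<Rightarrow> real interval" where
  "iadd A B = Ivl (lower A + lower B) (upper A + upper B)"

definition ismul :: "real \<Rightarrow> real interval \<Rightarrow> real interval" where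
  "ismul l A = Ivl (min (l * lower A) (l * upper A)) (max (l * lower A) (l * upper A))"

definition igH :: "real interval \<Rightarrow> real interval \<Rightarrow> real interval" where
  "igH A B = Ivl (min (lower A - lower B) (upper A - upper B))
                 (max (lower A - lower B) (upper A - upper B))"

definition ile :: "real interval \<Rightarrow> real interval \<Rightarrow> bool" where
  "ile A B \<longleftrightarrow> lower A \<le> lower B \<and> upper A \<le> upper B"

definition inorm :: "real interval \<Rightarrow> real" where
  "inorm A = max \<bar>lower A\<bar> \<bar>upper A\<bar>"

definition linear_ivf :: "('a::real_vector) set \<Rightarrow> ('a \<Rightarrow> real interval) \<Rightarrow> bool" where
  "linear_ivf Y L \<longleftrightarrow>
     (\<forall>x\<in>Y. \<forall>l::real. L (l *\<^sub>R x) = ismul l (L x)) \<and>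
     (\<forall>x\<in>Y. \<forall>y\<in>Y. iadd (L x) (L y) = L (x + y) \<or>
        (\<not> ile (iadd (L x) (L y)) (L (x + y)) \<and> \<not> ile (L (x + y)) (iadd (L x) (L y))))"

text \<open>gH-continuity on Y: L(x+d) \<ominus>gH L(x) \<rightarrow> 0 as d \<rightarrow> 0 (with x+d in Y);
  convergence of intervals to 0 means its interval norm tends to 0.\<close>
definition gH_continuous_on :: "('a::real_normed_vector) set \<Rightarrow> ('a \<Rightarrow> real interval) \<Rightarrow> bool" where
  "gH_continuous_on Y L \<longleftrightarrow>
     (\<forall>x\<in>Y. ((\<lambda>d. inorm (igH (L (x + d)) (L x))) \<longlongrightarrow> 0) (at 0 within {d. x + d \<in> Y}))"

end

theory Submission
  imports Defs
begin

text \<open>Homogeneity gives \<open>L (- x) = (-1) \<odot> L x\<close>, so the bound \<open>L \<preceq> C \<odot> \<parallel>x\<parallel>\<close> applied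
  at \<open>x\<close> and at \<open>- x\<close> bounds both endpoints of \<open>L x\<close> from above and from below by
  endpoints of \<open>C \<odot> \<parallel>x\<parallel>\<close>; hence \<open>\<parallel>L x\<parallel> \<le> \<parallel>C \<odot> \<parallel>x\<parallel>\<parallel> = \<parallel>C\<parallel> \<parallel>x\<parallel>\<close>.\<close>

lemma lower_Ivl: "lower (Ivl a b) = min a (b :: real)"
  by (simp add: lower.rep_eq Ivl.rep_eq)

lemma upper_Ivl: "upper (Ivl a b) = (b :: real)"
  by (simp add: upper.rep_eq Ivl.rep_eq)

lemma lower_ismul [simp]: "lower (ismul l A) = min (l * lower A) (l * upper A)"
  by (simp add: ismul_def lower_Ivl)

lemma upper_ismul [simp]: "upper (ismul l A) = max (l * lower A) (l * upper A)"
  by (simp add: ismul_def upper_Ivl)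

lemma max_abs_min_max: "max \<bar>min a b\<bar> \<bar>max a b\<bar> = max \<bar>a\<bar> \<bar>b :: real\<bar>"
  by (cases "a \<le> b") (simp_all add: max.commute)

lemma inorm_ismul: "inorm (ismul l A) = \<bar>l\<bar> * inorm A"
  by (simp add: inorm_def max_abs_min_max abs_mult max_mult_distrib_left)

lemma ismul_minus_one:
  "lower (ismul (-1) A) = - upper A" "upper (ismul (-1) A) = - lower A"
  using lower_le_upper[of A] by auto

lemma inorm_le_if_ile_and_ile_neg:
  assumes "ile A B" and "ile (ismul (-1) A) B"
  shows "inorm A \<le> inorm B"
proof -
  have "lower A \<le> lower B" "- lower A \<le> upper B" "upper A \<le> upper B" "- upper A \<le> lower B"
    using assms unfolding ile_def ismul_minus_one by auto
  then have "\<bar>lower A\<bar> \<le> inorm B" "\<bar>upper A\<bar> \<le> inorm B"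
    unfolding inorm_def by linarith+
  then show ?thesis
    unfolding inorm_def[of A] by simp
qed

lemma linear_ivf_minus:
  assumes "linear_ivf Y L" and "x \<in> Y"
  shows "L (- x) = ismul (-1) (L x)"
  using assms unfolding linear_ivf_def by (metis scaleR_minus1_left)

theorem mainTheorem3:
  fixes Y :: "(real ^ 'n) set" and L :: "real ^ 'n \<Rightarrow> real interval" and C :: "real interval"
  assumes "subspace Y"
    and "linear_ivf Y L"
    and "gH_continuous_on Y L"
    and "\<forall>x\<in>Y. ile (L x) (ismul (norm x) C)"
  shows "\<forall>x\<in>Y. inorm (L x) \<le> inorm C * norm x"
proof
  fix x assume x: "x \<in> Y"
  have "ile (L x) (ismul (norm x) C)"
    using assms(4) x by blast
  moreover have "ile (ismul (-1) (L x)) (ismul (norm x) C)"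
    using assms(4) subspace_neg[OF assms(1) x] linear_ivf_minus[OF assms(2) x] by force
  ultimately have "inorm (L x) \<le> inorm (ismul (norm x) C)"
    by (rule inorm_le_if_ile_and_ile_neg)
  then show "inorm (L x) \<le> inorm C * norm x"
    by (simp add: inorm_ismul mult.commute)
qed

end
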